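(* Let $0<q<1/2$, $p=1-q$, $z\ge 1$ an integer and $\kappa>0$. Define $$P(z,\kappa)=1-\sum_{k=0}^{z-1}\left(1-\left(\frac qp\right)^{z-k}\right)\frac{\mu^k}{k!}e^{-\mu},\qquad \mu=\kappa z\frac qp.$$ Then $$P(z,\kappa)=1-Q\!\left(z,\kappa z\frac qp\right)+\left(\frac qp\right)^z e^{\kappa z\frac{p-q}{p}}\,Q(z,\kappa z),$$ where $Q(a,x)=\Gamma(a,x)/\Gamma(a)$, with $\Gamma(a,x)=\int_x^{+\infty}t^{a-1}e^{-t}\,dt$, is the regularized upper incomplete gamma function.
   Context: $P(z,\kappa)$ is the probability of success of a double-spend attack (attackers with relative hash power $q$, honest miners with $p$) conditional on the honest miners having mined $z$ blocks in time $\tau_1=\kappa z t_0$, where $t_0$ is the mean honest block time; during this time the number of attacker blocks is Poisson with mean $\mu=\kappa zq/p$, and attackers lagging $m$ blocks behind catch up with probability $(q/p)^m$. *)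

theory Defs
  imports "HOL-Analysis.Analysis"
begin

definition upper_inc_Gamma :: "real \<Rightarrow> real \<Rightarrow> real" where
  "upper_inc_Gamma a x = integral {x..} (\<lambda>t. t powr (a - 1) * exp (- t))"

definition reg_upper_Gamma :: "real \<Rightarrow> real \<Rightarrow> real" where
  "reg_upper_Gamma a x = upper_inc_Gamma a x / Gamma a"

definition P_attack :: "real \<Rightarrow> nat \<Rightarrow> real \<Rightarrow> real" where
  "P_attack q z \<kappa> =
     (let p = 1 - q; \<mu> = \<kappa> * real z * (q / p) in
      1 - (\<Sum>k<z. (1 - (q / p) ^ (z - k)) * (\<mu> ^ k / fact k) * exp (- \<mu>)))"

end

theory Submission
  imports Defs
begin

text \<open>For an integer order z, Q(z, x) is the probability that a Poisson variable of mean x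
  is below z: the Poisson distribution function F_m(t) = e^(-t) \<Sum>_{k\<le>m} t^k/k! has derivative
  -e^(-t) t^m/m!, so it is the antiderivative of the gamma integrand vanishing at infinity.
  Both Q terms of the claim are therefore finite Poisson sums. In P(z, \<kappa>) the catch-up factor
  (q/p)^(z-k) combines with \<mu>^k = (\<kappa>z)^k (q/p)^k into (q/p)^z (\<kappa>z)^k, and moving the weight
  e^(-\<mu>) to e^(-\<kappa>z) costs the factor e^(\<kappa>z(p-q)/p).\<close>

definition poisson_cdf :: "nat \<Rightarrow> real \<Rightarrow> real" where
  "poisson_cdf m t = exp (- t) * (\<Sum>k\<le>m. t ^ k / fact k)"

lemma has_real_derivative_poisson_cdf:
  "(poisson_cdf m has_real_derivative (- exp (- t) * t ^ m / fact m)) (at t)"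
proof (induction m)
  case 0
  show ?case unfolding poisson_cdf_def by (auto intro!: derivative_eq_intros)
next
  case (Suc m)
  have split: "poisson_cdf (Suc m) = (\<lambda>t. poisson_cdf m t + exp (- t) * (t ^ Suc m / fact (Suc m)))"
    by (auto simp: poisson_cdf_def algebra_simps)
  have new_term: "((\<lambda>t. exp (- t) * (t ^ Suc m / fact (Suc m))) has_real_derivative
      (- exp (- t) * (t ^ Suc m / fact (Suc m)) + exp (- t) * (real (Suc m) * t ^ m / fact (Suc m)))) (at t)"
    using DERIV_mult[OF DERIV_exp[THEN DERIV_chain2, OF DERIV_minus[OF DERIV_ident]]
        DERIV_cdivide[OF DERIV_pow[of "Suc m" t], of "fact (Suc m)"]]
    by (simp add: algebra_simps)
  have "real (Suc m) * t ^ m / fact (Suc m) = t ^ m / fact m"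
    by (simp add: fact_Suc field_simps del: of_nat_Suc)
  then show ?case
    unfolding split using DERIV_add[OF Suc new_term] by (simp add: algebra_simps)
qed

lemma poisson_cdf_tendsto_0: "(poisson_cdf m \<longlongrightarrow> 0) at_top"
proof -
  have "((\<lambda>t. \<Sum>k\<le>m. t ^ k / exp t / fact k) \<longlongrightarrow> (0::real)) at_top"
    by (intro tendsto_null_sum tendsto_divide_zero tendsto_power_div_exp_0)
  moreover have "poisson_cdf m = (\<lambda>t. \<Sum>k\<le>m. t ^ k / exp t / fact k)"
    by (auto simp: poisson_cdf_def sum_distrib_left exp_minus field_simps)
  ultimately show ?thesis by simp
qed

lemma has_integral_gamma_integrand_nat:
  assumes "x \<le> y"
  shows "((\<lambda>t. t ^ m * exp (- t)) has_integral
           fact m * poisson_cdf m x - fact m * poisson_cdf m y) {x..y}"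
proof -
  have "((\<lambda>t. - fact m * poisson_cdf m t) has_real_derivative t ^ m * exp (- t)) (at t)" for t
    using DERIV_cmult[OF has_real_derivative_poisson_cdf, of "- fact m" m t] by (simp add: mult.commute)
  then have "((\<lambda>t. t ^ m * exp (- t)) has_integral
      - fact m * poisson_cdf m y - (- fact m * poisson_cdf m x)) {x..y}"
    by (intro fundamental_theorem_of_calculus assms)
       (simp add: has_real_derivative_iff_has_vector_derivative has_vector_derivative_at_within)
  then show ?thesis by (simp add: algebra_simps)
qed

lemma upper_inc_Gamma_Suc_nat:
  assumes "x > 0"
  shows "upper_inc_Gamma (real (Suc m)) x = fact m * poisson_cdf m x"
proof -
  let ?h = "\<lambda>t::real. t powr (real (Suc m) - 1) * exp (- t)"
  have finite_part: "(?h has_integral fact m * poisson_cdf m x - fact m * poisson_cdf m y) {x..y}"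
    if "x \<le> y" for y
    using has_integral_gamma_integrand_nat[OF that, of m] by (rule has_integral_eq[rotated]) (use assms in \<open>simp add: powr_realpow\<close>)
  have "(?h has_integral fact m * poisson_cdf m x) {x..}"
  proof (rule has_integral_to_inf)
    show "?h integrable_on {x..y}" for y
      using finite_part by (cases "x \<le> y") auto
  next
    have "\<forall>\<^sub>F y in at_top. fact m * poisson_cdf m x - fact m * poisson_cdf m y = integral {x..y} ?h"
      using eventually_ge_at_top[of x] by eventually_elim (rule integral_unique[OF finite_part, symmetric])
    moreover have "((\<lambda>y. fact m * poisson_cdf m x - fact m * poisson_cdf m y)
        \<longlongrightarrow> fact m * poisson_cdf m x - fact m * 0) at_top"
      by (intro tendsto_intros poisson_cdf_tendsto_0)
    ultimately show "((\<lambda>y. integral {x..y} ?h) \<longlongrightarrow> fact m * poisson_cdf m x) at_top"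
      using tendsto_cong by fastforce
  next
    show "?h y \<ge> 0" for y by simp
  qed
  then show ?thesis unfolding upper_inc_Gamma_def by (rule integral_unique)
qed

lemma reg_upper_Gamma_nat:
  assumes "x > 0" and "z \<ge> 1"
  shows "reg_upper_Gamma (real z) x = exp (- x) * (\<Sum>k<z. x ^ k / fact k)"
proof -
  obtain m where z: "z = Suc m" using assms(2) by (cases z) auto
  have "Gamma (real (Suc m)) = fact m"
    using Gamma_fact[of m] by (simp add: add.commute)
  moreover have "{..<Suc m} = {..m}" by auto
  ultimately show ?thesis
    using assms(1) by (simp add: z reg_upper_Gamma_def upper_inc_Gamma_Suc_nat poisson_cdf_def del: of_nat_Suc)
qed

lemma sum_catch_up_poisson:
  fixes r c :: real
  shows   "(\<Sum>k<z. r ^ (z - k) * ((c * r) ^ k / fact k)) = r ^ z * (\<Sum>k<z. c ^ k / fact k)"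
  unfolding sum_distrib_left
proof (rule sum.cong)
  fix k assume "k \<in> {..<z}"
  then have "r ^ (z - k) * r ^ k = r ^ z" by (simp add: power_add[symmetric])
  then show "r ^ (z - k) * ((c * r) ^ k / fact k) = r ^ z * (c ^ k / fact k)"
    by (simp add: power_mult_distrib field_simps)
qed simp

lemma P_attack_poisson_form:
  fixes q \<kappa> :: real and z :: nat
  defines "r \<equiv> q / (1 - q)" and "c \<equiv> \<kappa> * real z"
  shows "P_attack q z \<kappa> = 1 - exp (- (c * r)) * (\<Sum>k<z. (c * r) ^ k / fact k)
           + r ^ z * exp (c * (1 - r)) * (exp (- c) * (\<Sum>k<z. c ^ k / fact k))"
proof -
  have "(\<Sum>k<z. (1 - r ^ (z - k)) * ((c * r) ^ k / fact k) * exp (- (c * r)))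
      = exp (- (c * r)) * (\<Sum>k<z. (c * r) ^ k / fact k)
        - exp (- (c * r)) * (\<Sum>k<z. r ^ (z - k) * ((c * r) ^ k / fact k))"
    unfolding sum_distrib_left sum_subtractf[symmetric] by (rule sum.cong) (auto simp: field_simps)
  then have "P_attack q z \<kappa> = 1 - exp (- (c * r)) * (\<Sum>k<z. (c * r) ^ k / fact k)
      + exp (- (c * r)) * (r ^ z * (\<Sum>k<z. c ^ k / fact k))"
    unfolding P_attack_def Let_def r_def[symmetric] c_def[symmetric] sum_catch_up_poisson
    by (simp add: mult.assoc)
  moreover have "exp (- (c * r)) = exp (c * (1 - r)) * exp (- c)"
    by (simp add: exp_add[symmetric] algebra_simps)
  ultimately show ?thesis by simp
qed

theorem mainTheorem5:
  fixes q \<kappa> :: real and z :: nat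
  assumes "0 < q" and "q < 1/2" and "1 \<le> z" and "0 < \<kappa>"
  defines "p \<equiv> 1 - q"
  shows "P_attack q z \<kappa> =
           1 - reg_upper_Gamma (real z) (\<kappa> * real z * (q / p))
             + (q / p) ^ z * exp (\<kappa> * real z * ((p - q) / p)) * reg_upper_Gamma (real z) (\<kappa> * real z)"
proof -
  have "p > 0" using assms by (simp add: p_def)
  then have "(p - q) / p = 1 - q / p" by (simp add: field_simps)
  moreover have "\<kappa> * real z > 0" and "\<kappa> * real z * (q / p) > 0"
    using assms \<open>p > 0\<close> by simp_all
  ultimately show ?thesis
    using P_attack_poisson_form[of q z \<kappa>] assms(3)
    by (simp add: reg_upper_Gamma_nat p_def)
qed

end
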